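(* Let $\alpha\in(0,1)$. There exists a constant $D'_\alpha>0$ such that for every $n\ge1$, every real array $\mathbf b=(b_{s,t})$ and every $x>0$, $$P\Big(\sum_{1\le s<t\le n}b_{s,t}C_{s,t}\varepsilon_s\varepsilon_t>x\Big)\le D'_\alpha\,\frac{1+\log^+x}{x^\alpha}\,\Gamma_n(\mathbf b).$$
   Context: $(\varepsilon_t)_{t\ge1}$ are i.i.d. symmetric $\alpha$-stable with $E e^{\mathrm i u\varepsilon_1}=e^{-|u|^\alpha}$. $\mathbf C=(C_0,C_{s,t},\ s,t=1,2,\dots)$ is a family of i.i.d. $S_1(1,0,0)$ (standard symmetric Cauchy, $E e^{\mathrm iuC_0}=e^{-|u|}$) random variables independent of $(\varepsilon_t)$. For a real array $\mathbf b=(b_{s,t})$, $\Gamma_n(\mathbf b)=\sum_{1\le s\ne t\le n}|b_{s,t}|^\alpha\big(1+\log^+\frac1{|b_{s,t}|}\big)$, with terms having $b_{s,t}=0$ equal to $0$. *)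

theory Defs
  imports "HOL-Probability.Probability"
begin

text \<open>Index type for the joint family of random variables:
  Eps t is epsilon_t (t >= 1), Cau0 is C_0, Cau s t is C_{s,t} (s,t >= 1).\<close>
datatype rv_idx = Eps nat | Cau0 | Cau nat nat

definition rv_index_set :: "rv_idx set" where
  "rv_index_set = {Eps t | t. t \<ge> 1} \<union> {Cau0} \<union> {Cau s t | s t. s \<ge> 1 \<and> t \<ge> 1}"

definition joint_family ::
  "(nat \<Rightarrow> 'a \<Rightarrow> real) \<Rightarrow> ('a \<Rightarrow> real) \<Rightarrow> (nat \<Rightarrow> nat \<Rightarrow> 'a \<Rightarrow> real) \<Rightarrow> rv_idx \<Rightarrow> 'a \<Rightarrow> real" where
  "joint_family eps C0 C i = (case i of Eps t \<Rightarrow> eps t | Cau0 \<Rightarrow> C0 | Cau s t \<Rightarrow> C s t)"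

definition log_plus :: "real \<Rightarrow> real" where
  "log_plus y = max 0 (ln y)"

definition Gamma_n :: "real \<Rightarrow> nat \<Rightarrow> (nat \<Rightarrow> nat \<Rightarrow> real) \<Rightarrow> real" where
  "Gamma_n \<alpha> n b = (\<Sum>(s,t)\<in>{(s,t). s \<in> {1..n} \<and> t \<in> {1..n} \<and> s \<noteq> t}.
      if b s t = 0 then 0 else \<bar>b s t\<bar> powr \<alpha> * (1 + log_plus (1 / \<bar>b s t\<bar>)))"

end

theory Submission
  imports Defs
begin

(* The event {sum_{s<t} b_st C_st eps_s eps_t > x} forces the truncated ratios
  min(1, |b_st C_st eps_s eps_t| / x) to sum to at least 1, so by Markov's inequality its
  probability is at most the sum of their expectations.
  From the characteristic functions, a truncation inequality gives the power tails
  P(|eps| >= y) <= 4 y^(-alpha) and P(|C| >= y) <= 4 y^(-1).  By the layer-cake formula these tails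
  give a truncated moment bound for eps_s and fractional moment bounds E|eps_t|^p, E|C_st|^p for
  p < alpha.  Conditioning on eps_t C_st (independent of eps_s) bounds the expectation of the
  summand by a^p times these moments, where a = |b_st| / x; choosing p close to alpha in terms of
  log(1/a) turns this into a^alpha (1 + log+(1/a)), which is at most
  (1 + log+ x) / x^alpha times the weight of b_st in Gamma_n. *)

lemma one_minus_cos_has_integral:
  fixes u x :: real
  assumes "0 \<le> u" "x \<noteq> 0"
  shows "((\<lambda>t. 1 - cos (t * x)) has_integral 2 * (u - sin (u * x) / x)) {-u..u}"
proof -
  have "((\<lambda>t. 1 - cos (t * x)) has_integral (u - sin (u * x) / x) - (-u - sin (-u * x) / x)) {-u..u}"
  proof (rule fundamental_theorem_of_calculus)
    fix t :: real
    have "((\<lambda>t. t - sin (t * x) / x) has_real_derivative 1 - cos (t * x) * x / x) (at t within {-u..u})"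
      by (auto intro!: derivative_eq_intros)
    then show "((\<lambda>t. t - sin (t * x) / x) has_vector_derivative 1 - cos (t * x)) (at t within {-u..u})"
      using assms by (simp add: has_real_derivative_iff_has_vector_derivative)
  qed (use assms in auto)
  then show ?thesis by (simp add: algebra_simps)
qed

lemma one_minus_cos_integral_lower_bound:
  fixes u x :: real
  assumes "0 < u" "x \<noteq> 0"
  shows "u * indicator {x. 2 / u \<le> \<bar>x\<bar>} x \<le> 2 * (u - sin (u * x) / x)"
proof -
  have "\<bar>sin (u * x) / x\<bar> \<le> u" "\<bar>sin (u * x) / x\<bar> \<le> 1 / \<bar>x\<bar>"
    using abs_sin_x_le_abs_x[of "u * x"] abs_sin_le_one[of "u * x"] assms
    by (auto simp: abs_mult abs_divide field_simps)
  then have sin_le: "sin (u * x) / x \<le> u" "sin (u * x) / x \<le> 1 / \<bar>x\<bar>"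
    by (meson abs_ge_self order_trans)+
  show ?thesis
  proof (cases "2 / u \<le> \<bar>x\<bar>")
    case True
    then have "1 / \<bar>x\<bar> \<le> u / 2" using assms by (auto simp: field_simps)
    then show ?thesis using True sin_le by (simp add: indicator_def)
  qed (use sin_le in \<open>simp add: indicator_def\<close>)
qed

(* Proved by Tonelli, as 1 - Re(char mu t)
  is the mu-integral of the nonnegative function 1 - cos(t x). *)
lemma truncation_inequality:
  assumes "real_distribution \<mu>" "0 < u"
  shows "ennreal (u * measure \<mu> {x. 2 / u \<le> \<bar>x\<bar>})
    \<le> (\<integral>\<^sup>+t. ennreal (1 - Re (char \<mu> t)) * indicator {-u..u} t \<partial>lborel)"
proof -
  interpret real_distribution \<mu> by fact
  interpret pair_sigma_finite \<mu> lborel ..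
  have char_re: "ennreal (1 - Re (char \<mu> t)) = (\<integral>\<^sup>+x. ennreal (1 - cos (t * x)) \<partial>\<mu>)" for t
  proof -
    have "complex_integrable \<mu> (\<lambda>x. iexp (t * x))"
      by (rule integrable_const_bound[where B = 1]) auto
    then have "Re (char \<mu> t) = (\<integral>x. Re (iexp (t * x)) \<partial>\<mu>)"
      by (simp add: char_def)
    also have "\<dots> = (\<integral>x. cos (t * x) \<partial>\<mu>)"
      by (simp add: Re_exp)
    finally have "Re (char \<mu> t) = (\<integral>x. cos (t * x) \<partial>\<mu>)" .
    then have "1 - Re (char \<mu> t) = (\<integral>x. 1 - cos (t * x) \<partial>\<mu>)"
      using integrable_const_bound[where B = 1 and f = "\<lambda>x. cos (t * x)"]
      by (subst Bochner_Integration.integral_diff) (auto simp: prob_space[unfolded space_eq_univ])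
    then show ?thesis
      by (simp add: nn_integral_eq_integral integrable_const_bound[where B = 2])
  qed
  have inner: "(\<integral>\<^sup>+t. ennreal (1 - cos (t * x)) * indicator {-u..u} t \<partial>lborel)
      \<ge> ennreal (u * indicator {x. 2 / u \<le> \<bar>x\<bar>} x)" for x
  proof (cases "x = 0")
    case False
    have "(\<integral>\<^sup>+t. ennreal (1 - cos (t * x)) * indicator {-u..u} t \<partial>lborel)
        = ennreal (2 * (u - sin (u * x) / x))"
      using one_minus_cos_has_integral[of u x] False \<open>0 < u\<close>
      by (intro nn_integral_has_integral_lebesgue') auto
    then show ?thesis
      using one_minus_cos_integral_lower_bound[OF \<open>0 < u\<close> False] by (simp add: ennreal_leI)
  qed (use \<open>0 < u\<close> in \<open>simp add: indicator_def\<close>)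
  have "ennreal (u * measure \<mu> {x. 2 / u \<le> \<bar>x\<bar>}) = (\<integral>\<^sup>+x. ennreal (u * indicator {x. 2 / u \<le> \<bar>x\<bar>} x) \<partial>\<mu>)"
    using \<open>0 < u\<close> by (simp add: ennreal_mult nn_integral_cmult ennreal_indicator emeasure_eq_measure)
  also have "\<dots> \<le> (\<integral>\<^sup>+x. (\<integral>\<^sup>+t. ennreal (1 - cos (t * x)) * indicator {-u..u} t \<partial>lborel) \<partial>\<mu>)"
    by (intro nn_integral_mono inner)
  also have "\<dots> = (\<integral>\<^sup>+t. (\<integral>\<^sup>+x. ennreal (1 - cos (t * x)) * indicator {-u..u} t \<partial>\<mu>) \<partial>lborel)"
    by (rule Fubini'[symmetric]) measurable
  also have "\<dots> = (\<integral>\<^sup>+t. ennreal (1 - Re (char \<mu> t)) * indicator {-u..u} t \<partial>lborel)"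
    by (simp add: char_re nn_integral_multc)
  finally show ?thesis .
qed

(* A symmetric stable law of index a in (0,1] has tail P(|X| >= y) <= 4 y^(-a), because
  1 - exp(-|t|^a) <= |t|^a. *)
lemma stable_tail_bound:
  assumes "real_distribution \<mu>" "0 < a" "a \<le> 1" "0 < y"
    and char_stable: "\<And>u. char \<mu> u = complex_of_real (exp (- (\<bar>u\<bar> powr a)))"
  shows "measure \<mu> {x. y \<le> \<bar>x\<bar>} \<le> 4 * y powr (-a)"
proof -
  define u where "u = 2 / y"
  have "0 < u" "2 / u = y" using \<open>0 < y\<close> by (auto simp: u_def)
  have "ennreal (u * measure \<mu> {x. y \<le> \<bar>x\<bar>})
      \<le> (\<integral>\<^sup>+t. ennreal (1 - exp (- (\<bar>t\<bar> powr a))) * indicator {-u..u} t \<partial>lborel)"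
    using truncation_inequality[OF assms(1) \<open>0 < u\<close>] by (simp add: char_stable \<open>2 / u = y\<close>)
  also have "\<dots> \<le> (\<integral>\<^sup>+t. ennreal (u powr a) * indicator {-u..u} t \<partial>lborel)"
  proof (intro nn_integral_mono)
    fix t :: real
    have "\<bar>t\<bar> \<le> u \<Longrightarrow> 1 - exp (- (\<bar>t\<bar> powr a)) \<le> u powr a"
      using exp_ge_add_one_self[of "- (\<bar>t\<bar> powr a)"] powr_mono2[of a "\<bar>t\<bar>" u] \<open>0 < a\<close> by auto
    then show "ennreal (1 - exp (- (\<bar>t\<bar> powr a))) * indicator {-u..u} t \<le> ennreal (u powr a) * indicator {-u..u} t"
      by (auto simp: indicator_def ennreal_leI)
  qed
  also have "\<dots> = ennreal (2 * u * u powr a)"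
    using \<open>0 < u\<close> by (simp add: nn_integral_cmult_indicator ennreal_mult' emeasure_lborel_Icc_eq mult_ac)
  finally have "u * measure \<mu> {x. y \<le> \<bar>x\<bar>} \<le> u * (2 * u powr a)"
    using \<open>0 < u\<close> by (simp add: ennreal_le_iff mult_ac)
  then have "measure \<mu> {x. y \<le> \<bar>x\<bar>} \<le> 2 * u powr a"
    using \<open>0 < u\<close> by simp
  also have "\<dots> = 2 * 2 powr a * y powr (-a)"
    using \<open>0 < y\<close> by (simp add: u_def powr_divide powr_minus_divide)
  also have "\<dots> \<le> 4 * y powr (-a)"
    using powr_mono[of a 1 2] \<open>a \<le> 1\<close> by (intro mult_right_mono) auto
  finally show ?thesis .
qed

definition power_tail :: "'a measure \<Rightarrow> ('a \<Rightarrow> real) \<Rightarrow> real \<Rightarrow> real \<Rightarrow> bool" where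
  "power_tail M X K a \<longleftrightarrow> (\<forall>y>0. measure M {\<omega> \<in> space M. y \<le> \<bar>X \<omega>\<bar>} \<le> K * y powr (-a))"

lemma stable_variable_power_tail:
  assumes "prob_space M" "X \<in> borel_measurable M" "0 < a" "a \<le> 1"
    and "\<And>u. char (distr M borel X) u = complex_of_real (exp (- (\<bar>u\<bar> powr a)))"
  shows "power_tail M X 4 a"
  unfolding power_tail_def
proof (intro allI impI)
  fix y :: real assume "0 < y"
  interpret prob_space M by fact
  have "measure M {\<omega> \<in> space M. y \<le> \<bar>X \<omega>\<bar>} = measure (distr M borel X) {x. y \<le> \<bar>x\<bar>}"
    using assms(2) by (subst measure_distr) (auto intro!: arg_cong[where f = "measure M"])
  also have "\<dots> \<le> 4 * y powr (-a)"
    using assms \<open>0 < y\<close> by (intro stable_tail_bound) auto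
  finally show "measure M {\<omega> \<in> space M. y \<le> \<bar>X \<omega>\<bar>} \<le> 4 * y powr (-a)" .
qed

lemma nn_integral_layer_cake:
  assumes "sigma_finite_measure M" "f \<in> borel_measurable M" "\<And>\<omega>. 0 \<le> f \<omega>"
  shows "(\<integral>\<^sup>+\<omega>. ennreal (f \<omega>) \<partial>M) =
         (\<integral>\<^sup>+t. indicator {0<..} t * emeasure M {\<omega> \<in> space M. t < f \<omega>} \<partial>lborel)"
proof -
  interpret pair_sigma_finite M lborel
    using assms(1) by (simp add: pair_sigma_finite_def lborel.sigma_finite_measure_axioms)
  note [measurable] = assms(2)
  have "ennreal (f \<omega>) = (\<integral>\<^sup>+t. indicator {0<..} t * indicator {\<omega>. t < f \<omega>} \<omega> \<partial>lborel)" for \<omega>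
  proof -
    have "(\<lambda>t. indicator {0<..} t * indicator {\<omega>. t < f \<omega>} \<omega> :: ennreal) = indicator {0<..<f \<omega>}"
      by (auto simp: fun_eq_iff indicator_def)
    then show ?thesis using assms(3)[of \<omega>] by simp
  qed
  then have "(\<integral>\<^sup>+\<omega>. ennreal (f \<omega>) \<partial>M)
      = (\<integral>\<^sup>+\<omega>. (\<integral>\<^sup>+t. indicator {0<..} t * indicator {\<omega>. t < f \<omega>} \<omega> \<partial>lborel) \<partial>M)"
    by simp
  also have "\<dots> = (\<integral>\<^sup>+t. (\<integral>\<^sup>+\<omega>. indicator {0<..} t * indicator {\<omega>. t < f \<omega>} \<omega> \<partial>M) \<partial>lborel)"
    by (intro Fubini'[symmetric]) measurable
  also have "\<dots> = (\<integral>\<^sup>+t. indicator {0<..} t * emeasure M {\<omega> \<in> space M. t < f \<omega>} \<partial>lborel)"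
  proof (intro nn_integral_cong)
    fix t :: real
    have "(\<integral>\<^sup>+\<omega>. indicator {0<..} t * indicator {\<omega>. t < f \<omega>} \<omega> \<partial>M)
        = (\<integral>\<^sup>+\<omega>. indicator {0<..} t * indicator {\<omega> \<in> space M. t < f \<omega>} \<omega> \<partial>M)"
      by (intro nn_integral_cong) (auto simp: indicator_def)
    then show "(\<integral>\<^sup>+\<omega>. indicator {0<..} t * indicator {\<omega>. t < f \<omega>} \<omega> \<partial>M)
        = indicator {0<..} t * emeasure M {\<omega> \<in> space M. t < f \<omega>}"
      by (simp add: nn_integral_cmult_indicator)
  qed
  finally show ?thesis .
qed

lemma truncated_moment_bound:
  assumes "prob_space M" "X \<in> borel_measurable M" "power_tail M X K a"
    and "0 \<le> K" "0 < a" "a < 1" "0 < c"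
  shows "(\<integral>\<^sup>+\<omega>. ennreal (min 1 (c * \<bar>X \<omega>\<bar>)) \<partial>M) \<le> ennreal (K * c powr a / (1 - a))"
proof -
  interpret prob_space M by fact
  note [measurable] = assms(2)
  have level_set: "indicator {0<..} t * emeasure M {\<omega> \<in> space M. t < min 1 (c * \<bar>X \<omega>\<bar>)}
      \<le> ennreal (K * c powr a * t powr (-a)) * indicator {0..1} t" for t :: real
  proof (cases "0 < t \<and> t < 1")
    case True
    have "emeasure M {\<omega> \<in> space M. t < min 1 (c * \<bar>X \<omega>\<bar>)} \<le> emeasure M {\<omega> \<in> space M. t / c \<le> \<bar>X \<omega>\<bar>}"
      using \<open>0 < c\<close> by (intro emeasure_mono) (auto simp: field_simps)
    also have "\<dots> \<le> ennreal (K * (t / c) powr (-a))"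
      using assms(3) True \<open>0 < c\<close> by (auto simp: power_tail_def emeasure_eq_measure intro!: ennreal_leI)
    also have "K * (t / c) powr (-a) = K * c powr a * t powr (-a)"
      using True \<open>0 < c\<close> by (simp add: powr_divide powr_minus_divide)
    finally show ?thesis using True by (simp add: indicator_def)
  next
    case False
    show ?thesis
    proof (cases "t \<le> 0")
      case False
      then have "{\<omega> \<in> space M. t < min 1 (c * \<bar>X \<omega>\<bar>)} = {}"
        using \<open>\<not> (0 < t \<and> t < 1)\<close> by auto
      then show ?thesis by (metis emeasure_empty mult_zero_right zero_le)
    qed (simp add: indicator_def)
  qed
  have "((\<lambda>t. K * c powr a * t powr (-a)) has_integral K * c powr a * (1 powr (-a + 1) / (-a + 1))) {0..1}"
    using assms by (intro has_integral_mult_right has_integral_powr_from_0) auto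
  then have integral: "(\<integral>\<^sup>+t. ennreal (K * c powr a * t powr (-a)) * indicator {0..1} t \<partial>lborel)
      = ennreal (K * c powr a / (1 - a))"
    using assms by (subst nn_integral_has_integral_lebesgue') auto
  have "(\<integral>\<^sup>+\<omega>. ennreal (min 1 (c * \<bar>X \<omega>\<bar>)) \<partial>M)
      = (\<integral>\<^sup>+t. indicator {0<..} t * emeasure M {\<omega> \<in> space M. t < min 1 (c * \<bar>X \<omega>\<bar>)} \<partial>lborel)"
    using \<open>0 < c\<close> by (intro nn_integral_layer_cake) (auto simp: sigma_finite_measure_axioms)
  also have "\<dots> \<le> (\<integral>\<^sup>+t. ennreal (K * c powr a * t powr (-a)) * indicator {0..1} t \<partial>lborel)"
    by (intro nn_integral_mono level_set)
  finally show ?thesis unfolding integral .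
qed

lemma fractional_moment_bound:
  assumes "prob_space M" "X \<in> borel_measurable M" "power_tail M X K a"
    and "0 \<le> K" "0 < p" "p < a"
  shows "(\<integral>\<^sup>+\<omega>. ennreal (\<bar>X \<omega>\<bar> powr p) \<partial>M) \<le> ennreal (1 + K * p / (a - p))"
proof -
  interpret prob_space M by fact
  note [measurable] = assms(2)
  have tail: "emeasure M {\<omega> \<in> space M. t < \<bar>X \<omega>\<bar> powr p} \<le> ennreal (K * t powr (-a / p))"
    if "0 < t" for t :: real
  proof -
    have "emeasure M {\<omega> \<in> space M. t < \<bar>X \<omega>\<bar> powr p} \<le> emeasure M {\<omega> \<in> space M. t powr (1 / p) \<le> \<bar>X \<omega>\<bar>}"
    proof (intro emeasure_mono subsetI)
      fix \<omega> assume "\<omega> \<in> {\<omega> \<in> space M. t < \<bar>X \<omega>\<bar> powr p}"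
      then have "t powr (1 / p) \<le> (\<bar>X \<omega>\<bar> powr p) powr (1 / p)"
        using that assms by (intro powr_mono2) auto
      then show "\<omega> \<in> {\<omega> \<in> space M. t powr (1 / p) \<le> \<bar>X \<omega>\<bar>}"
        using \<open>\<omega> \<in> _\<close> assms by (simp add: powr_powr)
    qed simp
    also have "\<dots> \<le> ennreal (K * (t powr (1 / p)) powr (-a))"
      using assms(3) that by (auto simp: power_tail_def emeasure_eq_measure intro!: ennreal_leI)
    finally show ?thesis using that by (simp add: powr_powr)
  qed
  have level_set: "indicator {0<..} t * emeasure M {\<omega> \<in> space M. t < \<bar>X \<omega>\<bar> powr p}
      \<le> indicator {0..1} t + ennreal (K * t powr (-a / p)) * indicator {1..} t" for t :: real
  proof -
    consider "t \<le> 0" | "0 < t" "t \<le> 1" | "1 < t" by linarith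
    then show ?thesis
    proof cases
      case 2
      then have "indicator {0<..} t * emeasure M {\<omega> \<in> space M. t < \<bar>X \<omega>\<bar> powr p} \<le> indicator {0..1} t"
        using emeasure_le_1 by (simp add: indicator_def)
      then show ?thesis by (rule order_trans) (simp add: add_increasing2)
    next
      case 3
      then show ?thesis using tail[of t] by (simp add: indicator_def)
    qed (simp add: indicator_def)
  qed
  have "((\<lambda>t. K * t powr (-a / p)) has_integral K * (- (1 powr (-a / p + 1)) / (-a / p + 1))) {1..}"
    using assms by (intro has_integral_mult_right has_integral_powr_to_inf) (auto simp: field_simps)
  then have "(\<integral>\<^sup>+t. ennreal (K * t powr (-a / p)) * indicator {1..} t \<partial>lborel)
      = ennreal (K * (- (1 powr (-a / p + 1)) / (-a / p + 1)))"
    using assms by (subst nn_integral_has_integral_lebesgue') auto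
  also have "K * (- (1 powr (-a / p + 1)) / (-a / p + 1)) = K * p / (a - p)"
    using assms by (simp add: field_simps)
  finally have upper: "(\<integral>\<^sup>+t. ennreal (K * t powr (-a / p)) * indicator {1..} t \<partial>lborel)
      = ennreal (K * p / (a - p))" .
  have "(\<integral>\<^sup>+\<omega>. ennreal (\<bar>X \<omega>\<bar> powr p) \<partial>M)
      = (\<integral>\<^sup>+t. indicator {0<..} t * emeasure M {\<omega> \<in> space M. t < \<bar>X \<omega>\<bar> powr p} \<partial>lborel)"
    by (intro nn_integral_layer_cake) (auto simp: sigma_finite_measure_axioms)
  also have "\<dots> \<le> (\<integral>\<^sup>+t. indicator {0..1} t + ennreal (K * t powr (-a / p)) * indicator {1..} t \<partial>lborel)"
    by (intro nn_integral_mono level_set)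
  also have "\<dots> = emeasure lborel {0..1::real} + ennreal (K * p / (a - p))"
    using upper by (subst nn_integral_add) auto
  also have "\<dots> = ennreal (1 + K * p / (a - p))"
    using assms by (simp add: ennreal_plus)
  finally show ?thesis .
qed

lemma nn_integral_indep_decouple:
  fixes h :: "real \<Rightarrow> real \<Rightarrow> ennreal"
  assumes "prob_space M" "prob_space.indep_var M borel X borel V"
    and h: "(\<lambda>(x, v). h x v) \<in> borel_measurable (borel \<Otimes>\<^sub>M borel)"
  shows "(\<integral>\<^sup>+\<omega>. h (X \<omega>) (V \<omega>) \<partial>M) = (\<integral>\<^sup>+\<omega>'. (\<integral>\<^sup>+\<omega>. h (X \<omega>) (V \<omega>') \<partial>M) \<partial>M)"
proof -
  interpret prob_space M by fact
  have joint: "distr M borel X \<Otimes>\<^sub>M distr M borel V = distr M (borel \<Otimes>\<^sub>M borel) (\<lambda>\<omega>. (X \<omega>, V \<omega>))"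
    and [measurable]: "X \<in> borel_measurable M" "V \<in> borel_measurable M"
    using assms(2) indep_var_distribution_eq by auto
  interpret PX: prob_space "distr M borel X" by (rule prob_space_distr) simp
  interpret PV: prob_space "distr M borel V" by (rule prob_space_distr) simp
  interpret pair_prob_space "distr M borel X" "distr M borel V" ..
  have h_pair: "(\<lambda>(x, v). h x v) \<in> borel_measurable (distr M borel X \<Otimes>\<^sub>M distr M borel V)"
    using h by (simp add: measurable_def space_pair_measure sets_pair_measure)
  have inner_measurable: "(\<lambda>v. \<integral>\<^sup>+x. h x v \<partial>distr M borel X) \<in> borel_measurable borel"
  proof -
    have "(\<lambda>(v, x). h x v) \<in> borel_measurable (borel \<Otimes>\<^sub>M distr M borel X)"
      using measurable_pair_swap[OF h] by (simp add: measurable_def space_pair_measure sets_pair_measure)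
    from PX.borel_measurable_nn_integral[OF this] show ?thesis by simp
  qed
  have "(\<integral>\<^sup>+\<omega>. h (X \<omega>) (V \<omega>) \<partial>M) = (\<integral>\<^sup>+z. (\<lambda>(x, v). h x v) z \<partial>distr M (borel \<Otimes>\<^sub>M borel) (\<lambda>\<omega>. (X \<omega>, V \<omega>)))"
    using h by (subst nn_integral_distr) auto
  also have "\<dots> = (\<integral>\<^sup>+v. (\<integral>\<^sup>+x. h x v \<partial>distr M borel X) \<partial>distr M borel V)"
    using nn_integral_snd[OF h_pair] by (simp add: joint)
  also have "\<dots> = (\<integral>\<^sup>+\<omega>'. (\<integral>\<^sup>+x. h x (V \<omega>') \<partial>distr M borel X) \<partial>M)"
    using inner_measurable by (subst nn_integral_distr) auto
  also have "\<dots> = (\<integral>\<^sup>+\<omega>'. (\<integral>\<^sup>+\<omega>. h (X \<omega>) (V \<omega>') \<partial>M) \<partial>M)"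
    using h by (intro nn_integral_cong) (subst nn_integral_distr; auto simp: measurable_Pair2)
  finally show ?thesis .
qed

(* Combining the truncated moment bound with the trivial bound 1 gives a bound of order c^p
  for every exponent 0 < p <= a. *)
lemma truncated_moment_powr_bound:
  assumes "prob_space M" "X \<in> borel_measurable M" "power_tail M X K a"
    and "1 - a \<le> K" "0 < p" "p \<le> a" "a < 1" "0 \<le> c"
  shows "(\<integral>\<^sup>+\<omega>. ennreal (min 1 (c * \<bar>X \<omega>\<bar>)) \<partial>M) \<le> ennreal (K / (1 - a) * c powr p)"
proof (cases "c = 0")
  case False
  interpret prob_space M by fact
  have K: "1 \<le> K / (1 - a)" using assms by simp
  show ?thesis
  proof (cases "1 \<le> c")
    case True
    have "(\<integral>\<^sup>+\<omega>. ennreal (min 1 (c * \<bar>X \<omega>\<bar>)) \<partial>M) \<le> (\<integral>\<^sup>+\<omega>. 1 \<partial>M)"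
      by (intro nn_integral_mono) auto
    also have "\<dots> = ennreal 1" by (simp add: emeasure_space_1)
    also have "1 \<le> K / (1 - a) * c powr p"
      using mult_mono[OF K ge_one_powr_ge_zero[OF True, of p]] \<open>0 < p\<close> K by simp
    finally show ?thesis by (simp add: ennreal_leI)
  next
    case False
    have "(\<integral>\<^sup>+\<omega>. ennreal (min 1 (c * \<bar>X \<omega>\<bar>)) \<partial>M) \<le> ennreal (K * c powr a / (1 - a))"
      using assms \<open>c \<noteq> 0\<close> by (intro truncated_moment_bound) auto
    also have "K * c powr a / (1 - a) \<le> K / (1 - a) * c powr p"
      using False assms powr_mono'[of p a c] by (auto intro!: divide_right_mono mult_left_mono)
    finally show ?thesis by (simp add: ennreal_leI)
  qed
qed simp

(* Condition
  on Y*Z, use the bound for X, then the independence of Y and Z to split E(|Y|^p |Z|^p). *)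
lemma triple_product_bound:
  assumes "prob_space M"
    and [measurable]: "X \<in> borel_measurable M" "Y \<in> borel_measurable M" "Z \<in> borel_measurable M"
    and "0 < \<alpha>" "\<alpha> < 1" "0 < p" "p < \<alpha>" "0 < a"
    and tails: "power_tail M X 4 \<alpha>" "power_tail M Y 4 \<alpha>" "power_tail M Z 4 1"
    and indep: "prob_space.indep_var M borel X borel (\<lambda>\<omega>. Y \<omega> * Z \<omega>)" "prob_space.indep_var M borel Y borel Z"
  shows "(\<integral>\<^sup>+\<omega>. ennreal (min 1 (a * \<bar>X \<omega> * (Y \<omega> * Z \<omega>)\<bar>)) \<partial>M)
     \<le> ennreal (4 / (1 - \<alpha>) * a powr p * ((1 + 4 * p / (\<alpha> - p)) * (1 + 4 * p / (1 - p))))"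
proof -
  interpret prob_space M by fact
  define K where "K = 4 / (1 - \<alpha>)"
  have "K \<ge> 0" using assms by (simp add: K_def)
  have conditional: "(\<integral>\<^sup>+\<omega>. ennreal (min 1 (a * \<bar>X \<omega> * v\<bar>)) \<partial>M)
      \<le> ennreal (K * a powr p) * ennreal (\<bar>v\<bar> powr p)" for v
  proof -
    have "(\<integral>\<^sup>+\<omega>. ennreal (min 1 (a * \<bar>X \<omega> * v\<bar>)) \<partial>M) = (\<integral>\<^sup>+\<omega>. ennreal (min 1 ((a * \<bar>v\<bar>) * \<bar>X \<omega>\<bar>)) \<partial>M)"
      by (simp add: abs_mult mult_ac)
    also have "\<dots> \<le> ennreal (K * (a * \<bar>v\<bar>) powr p)"
      using assms unfolding K_def by (intro truncated_moment_powr_bound) auto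
    finally show ?thesis
      using \<open>0 < a\<close> \<open>K \<ge> 0\<close> by (simp add: powr_mult abs_mult ennreal_mult mult_ac)
  qed
  have "(\<integral>\<^sup>+\<omega>. ennreal (min 1 (a * \<bar>X \<omega> * (Y \<omega> * Z \<omega>)\<bar>)) \<partial>M)
      = (\<integral>\<^sup>+\<omega>'. (\<integral>\<^sup>+\<omega>. ennreal (min 1 (a * \<bar>X \<omega> * (Y \<omega>' * Z \<omega>')\<bar>)) \<partial>M) \<partial>M)"
    by (rule nn_integral_indep_decouple[OF assms(1) indep(1), where h = "\<lambda>x v. ennreal (min 1 (a * \<bar>x * v\<bar>))"]) measurable
  also have "\<dots> \<le> ennreal (K * a powr p) * (\<integral>\<^sup>+\<omega>'. ennreal (\<bar>Y \<omega>' * Z \<omega>'\<bar> powr p) \<partial>M)"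
    by (subst nn_integral_cmult[symmetric]) (auto intro!: nn_integral_mono conditional)
  also have "(\<integral>\<^sup>+\<omega>'. ennreal (\<bar>Y \<omega>' * Z \<omega>'\<bar> powr p) \<partial>M)
      = (\<integral>\<^sup>+\<omega>'. (\<integral>\<^sup>+\<omega>. ennreal (\<bar>Y \<omega>\<bar> powr p) * ennreal (\<bar>Z \<omega>'\<bar> powr p) \<partial>M) \<partial>M)"
    by (subst nn_integral_indep_decouple[OF assms(1) indep(2), where h = "\<lambda>y z. ennreal (\<bar>y\<bar> powr p) * ennreal (\<bar>z\<bar> powr p)", symmetric])
       (auto simp: abs_mult powr_mult ennreal_mult)
  also have "\<dots> = (\<integral>\<^sup>+\<omega>. ennreal (\<bar>Y \<omega>\<bar> powr p) \<partial>M) * (\<integral>\<^sup>+\<omega>'. ennreal (\<bar>Z \<omega>'\<bar> powr p) \<partial>M)"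
    by (simp add: nn_integral_multc nn_integral_cmult)
  also have "\<dots> \<le> ennreal (1 + 4 * p / (\<alpha> - p)) * ennreal (1 + 4 * p / (1 - p))"
    using assms by (intro mult_mono fractional_moment_bound) auto
  finally have "(\<integral>\<^sup>+\<omega>. ennreal (min 1 (a * \<bar>X \<omega> * (Y \<omega> * Z \<omega>)\<bar>)) \<partial>M)
      \<le> ennreal (K * a powr p) * (ennreal (1 + 4 * p / (\<alpha> - p)) * ennreal (1 + 4 * p / (1 - p)))"
    by (simp add: mult_left_mono)
  also have "\<dots> = ennreal (K * a powr p * ((1 + 4 * p / (\<alpha> - p)) * (1 + 4 * p / (1 - p))))"
    using assms \<open>K \<ge> 0\<close> by (simp add: ennreal_mult del: ennreal_plus)
  finally show ?thesis by (simp add: K_def)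
qed

lemma log_plus_nonneg: "0 \<le> log_plus y"
  by (simp add: log_plus_def)

lemma one_plus_log_plus_mult:
  assumes "0 < y" "0 < z"
  shows "1 + log_plus (y * z) \<le> (1 + log_plus y) * (1 + log_plus z)"
proof -
  have "log_plus (y * z) \<le> log_plus y + log_plus z"
    using assms by (simp add: log_plus_def ln_mult)
  moreover have "0 \<le> log_plus y * log_plus z"
    by (simp add: log_plus_nonneg)
  ultimately show ?thesis by (simp add: algebra_simps)
qed

(* Choosing p = alpha - alpha / (2 (1 + log+(1/a))) loses only a constant in a^p and makes
  the blow-up alpha / (alpha - p) of the fractional moment logarithmic in 1/a. *)
lemma moment_exponent_choice:
  assumes "0 < \<alpha>" "\<alpha> \<le> 1" "0 < a"
  obtains p where "0 < p" "p < \<alpha>" "a powr p \<le> 2 * a powr \<alpha>"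
    "\<alpha> / (\<alpha> - p) = 2 * (1 + log_plus (1 / a))"
proof -
  define L where "L = log_plus (1 / a)"
  define d where "d = \<alpha> / (2 * (1 + L))"
  have "0 \<le> L" "ln (1 / a) \<le> L" by (simp_all add: L_def log_plus_nonneg log_plus_def)
  have "0 < d" using assms \<open>0 \<le> L\<close> by (simp add: d_def)
  have "d \<le> \<alpha> / 2"
    using assms \<open>0 \<le> L\<close> unfolding d_def by (intro divide_left_mono) auto
  have "d * L = \<alpha> / 2 * (L / (1 + L))"
    using \<open>0 \<le> L\<close> by (simp add: d_def field_simps)
  also have "\<dots> \<le> 1 / 2 * 1"
    using assms \<open>0 \<le> L\<close> by (intro mult_mono) auto
  finally have "d * ln (1 / a) \<le> 1 / 2"
    using \<open>ln (1 / a) \<le> L\<close> mult_left_mono[OF \<open>ln (1 / a) \<le> L\<close>, of d] \<open>0 < d\<close> by linarith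
  then have "exp (d * ln (1 / a)) \<le> 2"
    using exp_half_le2 by (meson exp_le_cancel_iff order_trans)
  moreover have "a powr (\<alpha> - d) = a powr \<alpha> * exp (d * ln (1 / a))"
    using assms by (simp add: powr_def ln_div left_diff_distrib exp_diff exp_minus field_simps)
  ultimately have "a powr (\<alpha> - d) \<le> 2 * a powr \<alpha>"
    using mult_left_mono[of "exp (d * ln (1 / a))" 2 "a powr \<alpha>"] by (simp add: mult.commute)
  moreover have "\<alpha> / (\<alpha> - (\<alpha> - d)) = 2 * (1 + L)"
    using assms \<open>0 \<le> L\<close> by (simp add: d_def)
  ultimately show ?thesis
    using that[of "\<alpha> - d"] \<open>0 < d\<close> \<open>d \<le> \<alpha> / 2\<close> assms by (simp add: L_def)
qed

definition triple_const :: "real \<Rightarrow> real" where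
  "triple_const \<alpha> = 72 / (1 - \<alpha>) * (1 + 4 / (1 - \<alpha>))"

lemma triple_const_pos: "\<alpha> < 1 \<Longrightarrow> 0 < triple_const \<alpha>"
  by (simp add: triple_const_def add_pos_pos)

lemma triple_product_log_bound:
  assumes "prob_space M"
    and "X \<in> borel_measurable M" "Y \<in> borel_measurable M" "Z \<in> borel_measurable M"
    and "0 < \<alpha>" "\<alpha> < 1" "0 < a"
    and "power_tail M X 4 \<alpha>" "power_tail M Y 4 \<alpha>" "power_tail M Z 4 1"
    and "prob_space.indep_var M borel X borel (\<lambda>\<omega>. Y \<omega> * Z \<omega>)" "prob_space.indep_var M borel Y borel Z"
  shows "(\<integral>\<^sup>+\<omega>. ennreal (min 1 (a * \<bar>X \<omega> * (Y \<omega> * Z \<omega>)\<bar>)) \<partial>M)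
     \<le> ennreal (triple_const \<alpha> * a powr \<alpha> * (1 + log_plus (1 / a)))"
proof -
  define L where "L = log_plus (1 / a)"
  have "0 \<le> L" by (simp add: L_def log_plus_nonneg)
  obtain p where p: "0 < p" "p < \<alpha>" "a powr p \<le> 2 * a powr \<alpha>" "\<alpha> / (\<alpha> - p) = 2 * (1 + L)"
    using moment_exponent_choice[of \<alpha> a] assms unfolding L_def by auto
  have "4 * p / (\<alpha> - p) \<le> 4 * \<alpha> / (\<alpha> - p)"
    using p by (intro divide_right_mono) auto
  also have "\<dots> = 8 * (1 + L)"
    using p(4) by (metis mult.assoc mult_numeral_left_semiring_numeral num_double times_divide_eq_right)
  finally have first: "1 + 4 * p / (\<alpha> - p) \<le> 9 * (1 + L)"
    using \<open>0 \<le> L\<close> by argo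
  have "4 * p / (1 - p) \<le> 4 / (1 - p)"
    using p assms by (intro divide_right_mono) auto
  also have "\<dots> \<le> 4 / (1 - \<alpha>)"
    using p assms by (intro divide_left_mono) auto
  finally have second: "1 + 4 * p / (1 - p) \<le> 1 + 4 / (1 - \<alpha>)"
    by simp
  have "(\<integral>\<^sup>+\<omega>. ennreal (min 1 (a * \<bar>X \<omega> * (Y \<omega> * Z \<omega>)\<bar>)) \<partial>M)
     \<le> ennreal (4 / (1 - \<alpha>) * a powr p * ((1 + 4 * p / (\<alpha> - p)) * (1 + 4 * p / (1 - p))))"
    using assms p by (intro triple_product_bound) auto
  also have "\<dots> \<le> ennreal (4 / (1 - \<alpha>) * (2 * a powr \<alpha>) * ((9 * (1 + L)) * (1 + 4 / (1 - \<alpha>))))"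
  proof (rule ennreal_leI, rule mult_mono)
    show "4 / (1 - \<alpha>) * a powr p \<le> 4 / (1 - \<alpha>) * (2 * a powr \<alpha>)"
      using p assms by (intro mult_left_mono) auto
    show "(1 + 4 * p / (\<alpha> - p)) * (1 + 4 * p / (1 - p)) \<le> 9 * (1 + L) * (1 + 4 / (1 - \<alpha>))"
      using first second p assms \<open>0 \<le> L\<close> by (intro mult_mono) auto
  qed (use p assms in auto)
  also have "\<dots> = ennreal (triple_const \<alpha> * a powr \<alpha> * (1 + L))"
    using assms unfolding triple_const_def by (intro arg_cong[where f = ennreal]) (simp add: field_simps)
  finally show ?thesis unfolding L_def .
qed

definition gamma_weight :: "real \<Rightarrow> real \<Rightarrow> real" where
  "gamma_weight \<alpha> c = (if c = 0 then 0 else \<bar>c\<bar> powr \<alpha> * (1 + log_plus (1 / \<bar>c\<bar>)))"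

lemma gamma_weight_nonneg: "0 \<le> gamma_weight \<alpha> c"
  by (simp add: gamma_weight_def log_plus_nonneg)

lemma Gamma_n_eq_sum_gamma_weight:
  "Gamma_n \<alpha> n b = (\<Sum>(s, t) \<in> {(s, t). s \<in> {1..n} \<and> t \<in> {1..n} \<and> s \<noteq> t}. gamma_weight \<alpha> (b s t))"
  by (simp add: Gamma_n_def gamma_weight_def)

lemma Gamma_n_nonneg: "0 \<le> Gamma_n \<alpha> n b"
  unfolding Gamma_n_eq_sum_gamma_weight by (intro sum_nonneg) (auto simp: gamma_weight_nonneg)

lemma rescaled_weight_bound:
  assumes "c \<noteq> 0" "0 < x" "0 < \<alpha>"
  shows "(\<bar>c\<bar> / x) powr \<alpha> * (1 + log_plus (1 / (\<bar>c\<bar> / x)))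
    \<le> (1 + log_plus x) / x powr \<alpha> * gamma_weight \<alpha> c"
proof -
  have "1 + log_plus (1 / (\<bar>c\<bar> / x)) \<le> (1 + log_plus x) * (1 + log_plus (1 / \<bar>c\<bar>))"
    using one_plus_log_plus_mult[of x "1 / \<bar>c\<bar>"] assms by simp
  then have "(\<bar>c\<bar> / x) powr \<alpha> * (1 + log_plus (1 / (\<bar>c\<bar> / x)))
      \<le> (\<bar>c\<bar> / x) powr \<alpha> * ((1 + log_plus x) * (1 + log_plus (1 / \<bar>c\<bar>)))"
    by (rule mult_left_mono) simp
  also have "\<dots> = (1 + log_plus x) / x powr \<alpha> * gamma_weight \<alpha> c"
    using assms by (simp add: gamma_weight_def powr_divide)
  finally show ?thesis .
qed

lemma sum_gt_imp_truncated_sum_ge_one: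
  fixes f :: "'b \<Rightarrow> real"
  assumes "finite T" "0 < x" "x < (\<Sum>k\<in>T. f k)"
  shows "1 \<le> (\<Sum>k\<in>T. min 1 (\<bar>f k\<bar> / x))"
proof (cases "\<exists>k\<in>T. x \<le> \<bar>f k\<bar>")
  case True
  then obtain k where "k \<in> T" "x \<le> \<bar>f k\<bar>" by blast
  then have "1 = min 1 (\<bar>f k\<bar> / x)" using assms by simp
  also have "\<dots> \<le> (\<Sum>k\<in>T. min 1 (\<bar>f k\<bar> / x))"
    using assms \<open>k \<in> T\<close> by (intro member_le_sum) auto
  finally show ?thesis .
next
  case False
  have "1 < (\<Sum>k\<in>T. f k) / x"
    using assms by simp
  also have "\<dots> \<le> (\<Sum>k\<in>T. \<bar>f k\<bar>) / x"
    using assms by (intro divide_right_mono sum_mono) auto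
  also have "\<dots> = (\<Sum>k\<in>T. min 1 (\<bar>f k\<bar> / x))"
    using False assms by (auto simp: sum_divide_distrib intro!: sum.cong)
  finally show ?thesis by simp
qed

lemma sum_tail_le_truncated_moments:
  fixes f :: "'b \<Rightarrow> 'a \<Rightarrow> real"
  assumes "finite T" "0 < x" "\<And>k. k \<in> T \<Longrightarrow> f k \<in> borel_measurable M"
  shows "emeasure M {\<omega> \<in> space M. x < (\<Sum>k\<in>T. f k \<omega>)}
    \<le> (\<Sum>k\<in>T. \<integral>\<^sup>+\<omega>. ennreal (min 1 (\<bar>f k \<omega>\<bar> / x)) \<partial>M)"
proof -
  define F where "F \<omega> = (\<Sum>k\<in>T. min 1 (\<bar>f k \<omega>\<bar> / x))" for \<omega>
  have [measurable]: "F \<in> borel_measurable M"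
    unfolding F_def using assms(3) by measurable
  have "{\<omega> \<in> space M. x < (\<Sum>k\<in>T. f k \<omega>)} \<subseteq> {\<omega> \<in> space M. 1 \<le> F \<omega>}"
    using sum_gt_imp_truncated_sum_ge_one[OF assms(1,2)] by (auto simp: F_def)
  then have "emeasure M {\<omega> \<in> space M. x < (\<Sum>k\<in>T. f k \<omega>)} \<le> emeasure M {\<omega> \<in> space M. 1 \<le> F \<omega>}"
    by (intro emeasure_mono) measurable
  also have "\<dots> \<le> (\<integral>\<^sup>+\<omega>. ennreal (F \<omega>) \<partial>M)"
    using nn_integral_Markov_inequality[of "\<lambda>\<omega>. ennreal (F \<omega>)" "space M" M 1] by simp
  also have "\<dots> = (\<integral>\<^sup>+\<omega>. (\<Sum>k\<in>T. ennreal (min 1 (\<bar>f k \<omega>\<bar> / x))) \<partial>M)"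
    using assms(2) by (intro nn_integral_cong) (simp add: F_def sum_ennreal)
  also have "\<dots> = (\<Sum>k\<in>T. \<integral>\<^sup>+\<omega>. ennreal (min 1 (\<bar>f k \<omega>\<bar> / x)) \<partial>M)"
    by (rule nn_integral_sum) (use assms(3) in measurable)
  finally show ?thesis .
qed

lemma joint_family_components:
  assumes "prob_space M" "prob_space.indep_vars M (\<lambda>_. borel) (joint_family eps C0 C) rv_index_set"
    and "1 \<le> s" "s < t"
  shows "eps s \<in> borel_measurable M" "eps t \<in> borel_measurable M" "C s t \<in> borel_measurable M"
    and "prob_space.indep_var M borel (eps s) borel (\<lambda>\<omega>. eps t \<omega> * C s t \<omega>)"
    and "prob_space.indep_var M borel (eps t) borel (C s t)"
proof -
  interpret prob_space M by fact
  let ?J = "joint_family eps C0 C"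
  have indices: "Eps s \<in> rv_index_set" "Eps t \<in> rv_index_set" "Cau s t \<in> rv_index_set"
    using assms(3,4) by (auto simp: rv_index_set_def)
  have "random_variable borel (?J i)" if "i \<in> rv_index_set" for i
    using assms(2) that unfolding indep_vars_def by auto
  from this[OF indices(1)] this[OF indices(2)] this[OF indices(3)]
  show "eps s \<in> borel_measurable M" "eps t \<in> borel_measurable M" "C s t \<in> borel_measurable M"
    by (simp_all add: joint_family_def)
  have "indep_vars (\<lambda>_. borel) ?J (insert (Eps s) {Eps t, Cau s t})"
    using indices by (intro indep_vars_subset[OF assms(2)]) auto
  from indep_vars_prod[OF _ _ this]
  show "indep_var borel (eps s) borel (\<lambda>\<omega>. eps t \<omega> * C s t \<omega>)"
    using assms(4) by (simp add: joint_family_def)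
  have "indep_vars (\<lambda>_. borel) ?J (insert (Eps t) {Cau s t})"
    using indices by (intro indep_vars_subset[OF assms(2)]) auto
  from indep_vars_prod[OF _ _ this]
  show "indep_var borel (eps t) borel (C s t)"
    by (simp add: joint_family_def)
qed

lemma pair_term_bound:
  assumes "0 < \<alpha>" "\<alpha> < 1" "prob_space M"
    and indep: "prob_space.indep_vars M (\<lambda>_. borel) (joint_family eps C0 C) rv_index_set"
    and char_eps: "\<forall>t \<ge> 1. \<forall>u. char (distr M borel (eps t)) u = complex_of_real (exp (- (\<bar>u\<bar> powr \<alpha>)))"
    and char_C: "\<forall>s \<ge> 1. \<forall>t \<ge> 1. \<forall>u. char (distr M borel (C s t)) u = complex_of_real (exp (- \<bar>u\<bar>))"
    and "1 \<le> s" "s < t" "0 < x"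
  shows "(\<integral>\<^sup>+\<omega>. ennreal (min 1 (\<bar>c * C s t \<omega> * eps s \<omega> * eps t \<omega>\<bar> / x)) \<partial>M)
    \<le> ennreal (triple_const \<alpha> * (1 + log_plus x) / x powr \<alpha> * gamma_weight \<alpha> c)"
proof (cases "c = 0")
  case False
  note components = joint_family_components[OF assms(3) indep assms(7,8)]
  have tails: "power_tail M (eps s) 4 \<alpha>" "power_tail M (eps t) 4 \<alpha>" "power_tail M (C s t) 4 1"
    using assms components by (auto intro!: stable_variable_power_tail)
  define a where "a = \<bar>c\<bar> / x"
  have "0 < a" using False \<open>0 < x\<close> by (simp add: a_def)
  have "(\<integral>\<^sup>+\<omega>. ennreal (min 1 (\<bar>c * C s t \<omega> * eps s \<omega> * eps t \<omega>\<bar> / x)) \<partial>M)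
      = (\<integral>\<^sup>+\<omega>. ennreal (min 1 (a * \<bar>eps s \<omega> * (eps t \<omega> * C s t \<omega>)\<bar>)) \<partial>M)"
    by (simp add: a_def abs_mult mult_ac)
  also have "\<dots> \<le> ennreal (triple_const \<alpha> * a powr \<alpha> * (1 + log_plus (1 / a)))"
    using assms \<open>0 < a\<close> components tails by (intro triple_product_log_bound) auto
  also have "\<dots> \<le> ennreal (triple_const \<alpha> * ((1 + log_plus x) / x powr \<alpha> * gamma_weight \<alpha> c))"
    unfolding a_def mult.assoc using triple_const_pos[OF \<open>\<alpha> < 1\<close>]
    by (intro ennreal_leI mult_left_mono rescaled_weight_bound False \<open>0 < x\<close> \<open>0 < \<alpha>\<close>) auto
  finally show ?thesis by (simp add: mult_ac)
qed simp

lemma quadratic_form_tail: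
  assumes "0 < \<alpha>" "\<alpha> < 1" "prob_space M"
    and indep: "prob_space.indep_vars M (\<lambda>_. borel) (joint_family eps C0 C) rv_index_set"
    and char_eps: "\<forall>t \<ge> 1. \<forall>u. char (distr M borel (eps t)) u = complex_of_real (exp (- (\<bar>u\<bar> powr \<alpha>)))"
    and char_C: "\<forall>s \<ge> 1. \<forall>t \<ge> 1. \<forall>u. char (distr M borel (C s t)) u = complex_of_real (exp (- \<bar>u\<bar>))"
    and "0 < x"
  shows "measure M {\<omega> \<in> space M. (\<Sum>s\<in>{1..n}. \<Sum>t\<in>{s<..n}. b s t * C s t \<omega> * eps s \<omega> * eps t \<omega>) > x}
    \<le> triple_const \<alpha> * (1 + log_plus x) / x powr \<alpha> * Gamma_n \<alpha> n b"
proof -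
  interpret prob_space M by fact
  define T where "T = Sigma {1..n} (\<lambda>s. {s<..n})"
  define summand where "summand = (\<lambda>(s, t) \<omega>. b s t * C s t \<omega> * eps s \<omega> * eps t \<omega>)"
  define c where "c = triple_const \<alpha> * (1 + log_plus x) / x powr \<alpha>"
  have "0 \<le> c"
    using triple_const_pos[OF \<open>\<alpha> < 1\<close>] by (simp add: c_def log_plus_nonneg add_nonneg_nonneg)
  have "finite T" by (simp add: T_def)
  have T_pairs: "1 \<le> s \<and> s < t" if "(s, t) \<in> T" for s t
    using that by (auto simp: T_def)
  have summand_measurable: "summand k \<in> borel_measurable M" if "k \<in> T" for k
  proof -
    from \<open>k \<in> T\<close> obtain s t where k: "k = (s, t)" "1 \<le> s" "s < t"
      using T_pairs by (cases k) auto
    note [measurable] = joint_family_components(1-3)[OF assms(3) indep k(2,3)]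
    show ?thesis by (simp add: k summand_def)
  qed
  have "{\<omega> \<in> space M. (\<Sum>s\<in>{1..n}. \<Sum>t\<in>{s<..n}. b s t * C s t \<omega> * eps s \<omega> * eps t \<omega>) > x}
      = {\<omega> \<in> space M. x < (\<Sum>k\<in>T. summand k \<omega>)}"
    by (simp add: T_def summand_def sum.Sigma split_beta')
  then have "emeasure M {\<omega> \<in> space M. (\<Sum>s\<in>{1..n}. \<Sum>t\<in>{s<..n}. b s t * C s t \<omega> * eps s \<omega> * eps t \<omega>) > x}
      \<le> (\<Sum>k\<in>T. \<integral>\<^sup>+\<omega>. ennreal (min 1 (\<bar>summand k \<omega>\<bar> / x)) \<partial>M)"
    using sum_tail_le_truncated_moments[OF \<open>finite T\<close> \<open>0 < x\<close> summand_measurable] by simp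
  also have "\<dots> \<le> (\<Sum>(s, t)\<in>T. ennreal (c * gamma_weight \<alpha> (b s t)))"
    using T_pairs assms pair_term_bound[of \<alpha> M eps C0 C] by (intro sum_mono) (auto simp: summand_def c_def)
  also have "\<dots> = ennreal (c * (\<Sum>(s, t)\<in>T. gamma_weight \<alpha> (b s t)))"
    using \<open>0 \<le> c\<close> by (simp add: split_beta' sum_distrib_left gamma_weight_nonneg)
  also have "\<dots> \<le> ennreal (c * Gamma_n \<alpha> n b)"
    unfolding Gamma_n_eq_sum_gamma_weight using \<open>0 \<le> c\<close>
    by (intro ennreal_leI mult_left_mono sum_mono2)
       (auto simp: T_def gamma_weight_nonneg intro: finite_subset[of _ "{1..n} \<times> {1..n}"])
  finally have "ennreal (measure M {\<omega> \<in> space M. (\<Sum>s\<in>{1..n}. \<Sum>t\<in>{s<..n}. b s t * C s t \<omega> * eps s \<omega> * eps t \<omega>) > x})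
      \<le> ennreal (c * Gamma_n \<alpha> n b)"
    by (simp add: emeasure_eq_measure)
  moreover have "0 \<le> c * Gamma_n \<alpha> n b"
    using \<open>0 \<le> c\<close> Gamma_n_nonneg by simp
  ultimately show ?thesis
    unfolding c_def by simp
qed

theorem lemmaA2:
  fixes \<alpha> :: real
  assumes "0 < \<alpha>" and "\<alpha> < 1"
  shows "\<exists>D > 0. \<forall>(M :: 'a measure) (eps :: nat \<Rightarrow> 'a \<Rightarrow> real) (C0 :: 'a \<Rightarrow> real)
            (C :: nat \<Rightarrow> nat \<Rightarrow> 'a \<Rightarrow> real).
      prob_space M
      \<and> prob_space.indep_vars M (\<lambda>_. borel) (joint_family eps C0 C) rv_index_set
      \<and> (\<forall>t \<ge> 1. \<forall>u. char (distr M borel (eps t)) u = complex_of_real (exp (- (\<bar>u\<bar> powr \<alpha>))))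
      \<and> (\<forall>u. char (distr M borel C0) u = complex_of_real (exp (- \<bar>u\<bar>)))
      \<and> (\<forall>s \<ge> 1. \<forall>t \<ge> 1. \<forall>u. char (distr M borel (C s t)) u = complex_of_real (exp (- \<bar>u\<bar>)))
      \<longrightarrow> (\<forall>(n::nat) (b :: nat \<Rightarrow> nat \<Rightarrow> real) (x::real). n \<ge> 1 \<and> x > 0 \<longrightarrow>
            measure M {\<omega> \<in> space M.
               (\<Sum>s\<in>{1..n}. \<Sum>t\<in>{s<..n}. b s t * C s t \<omega> * eps s \<omega> * eps t \<omega>) > x}
            \<le> D * (1 + log_plus x) / x powr \<alpha> * Gamma_n \<alpha> n b)"
  using triple_const_pos[OF assms(2)] quadratic_form_tail[OF assms]
  by (intro exI[of _ "triple_const \<alpha>"] conjI allI impI) auto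

end
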